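(* Let $\alpha\in(0,1/2]$. Let $p_1,\dots,p_m$ be real numbers with $p_j\ge\alpha$ for all $j$ and $\sum_j p_j=1$, and let $c_1,\dots,c_m\in\mathbb{R}$ satisfy $\sum_j p_jc_j=0$. Then \[ \sum_j p_j\,e^{c_j-\frac{c_j^2}{4\alpha}}\le 1. \] *)

theory Defs
  imports Complex_Main
begin

end

theory Submission
  imports Defs "HOL-Analysis.Convex"
begin

(* Write g(c) = exp (c - c^2/(4 a)), so g(0) = 1, g'(0) = 1, and for a <= 1/2 the function g is
   concave on [0, 2a], where it rises to its maximum exp a; extending it by exp a gives a concave
   majorant G of g on [0, infinity).  Let M be the common value of the positive and the negative
   part of the first moment sum p_j c_j, and x0 = M/(1 - a).  Every c_j >= 0 is handled by the
   tangent line of G at x0.  For c_j = -t < 0 we have a t <= p_j t <= M, and the two-point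
   inequality a g(-t) + (1 - a) G(a t/(1 - a)) <= 1 (weights a, 1 - a at two points of mean zero),
   combined with the decrease of the chord slopes (G(x) - 1)/x, gives g(-t) <= 1 - t (G(x0) - 1)/x0.
   Summing these affine bounds, the moment conditions leave 1 + (G(x0) - x0 G'(x0) - 1)(P - (1 - a)),
   where P is the weight on the indices with c_j >= 0.  The first factor is nonnegative by
   concavity, and P <= 1 - a because some negative c_j carries weight at least a.
   The two-point inequality reduces to one real variable r in [0, 1]; it follows from a polynomial
   certificate for a <= 3/8 and from a monotonicity argument for a >= 3/8. *)

definition gauss_bump :: "real \<Rightarrow> real \<Rightarrow> real" where
  "gauss_bump a c = exp (c - c^2 / (4*a))"

lemma gauss_bump_0 [simp]: "gauss_bump a 0 = 1"
  by (simp add: gauss_bump_def)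

lemma gauss_bump_pos: "0 < gauss_bump a c"
  by (simp add: gauss_bump_def)

lemma gauss_bump_le_exp:
  assumes "0 < a"
  shows "gauss_bump a c \<le> exp a"
proof -
  have "c - c^2 / (4*a) = a - (c - 2*a)^2 / (4*a)"
    using assms by (simp add: field_simps power2_eq_square)
  also have "\<dots> \<le> a"
    using assms by simp
  finally show ?thesis
    unfolding gauss_bump_def by simp
qed

lemma gauss_bump_double: "0 < a \<Longrightarrow> gauss_bump a (2*a) = exp a"
  by (simp add: gauss_bump_def power2_eq_square)

lemma gauss_bump_mono:
  assumes "0 < a" "c \<le> d" "d \<le> 2*a"
  shows "gauss_bump a c \<le> gauss_bump a d"
proof -
  have "(d - d^2 / (4*a)) - (c - c^2 / (4*a)) = (d - c) * (4*a - (c + d)) / (4*a)"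
    using assms(1) by (simp add: field_simps power2_eq_square)
  also have "\<dots> \<ge> 0"
    using assms by simp
  finally show ?thesis
    unfolding gauss_bump_def by simp
qed

lemma gauss_bump_has_real_derivative:
  assumes "0 < a"
  shows "(gauss_bump a has_real_derivative (1 - x/(2*a)) * gauss_bump a x) (at x)"
  unfolding gauss_bump_def[abs_def] using assms
  by (auto intro!: derivative_eq_intros simp: field_simps)

lemma gauss_bump_below_tangent:
  assumes a: "0 < a" "a \<le> 1/2" and x: "0 \<le> x" "x \<le> 2*a" and c: "0 \<le> c" "c \<le> 2*a"
  shows "gauss_bump a c \<le> gauss_bump a x + (1 - x/(2*a)) * gauss_bump a x * (c - x)"
proof -
  define g' where "g' t = (1 - t/(2*a)) * gauss_bump a t" for t
  define g'' where "g'' t = ((1 - t/(2*a))^2 - 1/(2*a)) * gauss_bump a t" for t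
  have "(g' has_real_derivative g'' t) (at t)" for t
  proof -
    have "((\<lambda>t. 1 - t/(2*a)) has_real_derivative - 1/(2*a)) (at t)"
      using a by (auto intro!: derivative_eq_intros)
    from DERIV_mult[OF this gauss_bump_has_real_derivative[OF a(1)]]
    have "(g' has_real_derivative
        - 1/(2*a) * gauss_bump a t + (1 - t/(2*a)) * gauss_bump a t * (1 - t/(2*a))) (at t)"
      unfolding g'_def[abs_def] .
    moreover have "- 1/(2*a) * gauss_bump a t + (1 - t/(2*a)) * gauss_bump a t * (1 - t/(2*a)) = g'' t"
      unfolding g''_def using a by (simp add: power2_eq_square field_simps)
    ultimately show ?thesis
      by simp
  qed
  moreover have "g'' t \<le> 0" if "t \<in> {0..2*a}" for t
  proof -
    have "(1 - t/(2*a))^2 \<le> 1"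
      using that a by (intro power_le_one) (auto simp: field_simps)
    moreover have "1 \<le> 1/(2*a)"
      using a by (simp add: field_simps)
    ultimately show ?thesis
      unfolding g''_def using gauss_bump_pos[of a t] by (simp add: mult_nonpos_nonneg)
  qed
  ultimately have "- g' x * (c - x) \<le> - gauss_bump a c - - gauss_bump a x"
    using x c gauss_bump_has_real_derivative[OF a(1)] unfolding g'_def[symmetric]
    by (intro f''_imp_f'[of "{0..2*a}" _ "\<lambda>t. - g' t" "\<lambda>t. - g'' t"] DERIV_minus) auto
  then show ?thesis
    unfolding g'_def by simp
qed

lemma gauss_bump_two_point_eq:
  assumes "0 < a"
  shows "gauss_bump a (- (2*(1-a)*r)) = exp (- ((1-a)*r*((1-a)*r + 2*a)/a))"
    and "gauss_bump a (2*a*r) = exp (a*r*(2-r))"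
  using assms unfolding gauss_bump_def by (simp_all add: field_simps power2_eq_square)

lemma exp_le_quadratic_small:
  fixes x :: real
  assumes "0 \<le> x" "x \<le> 3/8"
  shows "exp x \<le> 1 + x + 5/8 * x^2"
proof -
  obtain t where t: "\<bar>t\<bar> \<le> \<bar>x\<bar>" "exp x = (\<Sum>m<3. x^m / fact m) + exp t / fact 3 * x^3"
    using Maclaurin_exp_le[of x 3] by blast
  have "exp t \<le> exp (1/2)"
    using t(1) assms by simp
  also have "\<dots> \<le> 2"
    by (rule exp_half_le2)
  finally have "exp t / fact 3 * x^3 \<le> 2/6 * x^3"
    using assms by (intro mult_right_mono) (auto simp: fact_numeral)
  also have "\<dots> \<le> 1/8 * x^2"
    using mult_right_mono[OF assms(2), of "x^2"] by (simp add: power3_eq_cube power2_eq_square)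
  finally show ?thesis
    using t(2) by (simp add: numeral_3_eq_3 power2_eq_square)
qed

lemma two_point_small_weight_certificate:
  fixes a r :: real
  assumes a: "0 \<le> a" "a \<le> 3/8" and r: "0 \<le> r" "r \<le> 1"
  defines "w \<equiv> (1-a)*r*((1-a)*r + 2*a)" and "x \<equiv> a*r*(2-r)"
  shows "2*a^3 \<le> (1 - (1-a) * (1 + x + 5/8*x^2)) * (2*a^2 + 2*a*w + w^2)"
proof -
  define s where "s = 8*a/3"
  have "0 \<le> s" "s \<le> 1"
    using a unfolding s_def by auto
  have a_eq: "a = 3*s/8"
    unfolding s_def by simp
  (* The difference of the two sides, divided by a (1-a) r^2, written in the Bernstein basis of
     the unit square in s = 8a/3 and r: all coefficients are positive. *)
  have B: "0 \<le> (1-s)^6*r^2*(1-r)^5 + 3*(1-s)^6*r^3*(1-r)^4 + 3*(1-s)^6*r^4*(1-r)^3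
    + (1-s)^6*r^5*(1-r)^2 + (3/4)*s*(1-s)^5*(1-r)^7 + (21/4)*s*(1-s)^5*r*(1-r)^6
    + (147/8)*s*(1-s)^5*r^2*(1-r)^5 + (255/8)*s*(1-s)^5*r^3*(1-r)^4
    + (417/16)*s*(1-s)^5*r^4*(1-r)^3 + (69/8)*s*(1-s)^5*r^5*(1-r)^2
    + (45/64)*s*(1-s)^5*r^6*(1-r) + (9/64)*s*(1-s)^5*r^7 + (51/16)*s^2*(1-s)^4*(1-r)^7
    + (87/4)*s^2*(1-s)^4*r*(1-r)^6 + (2073/32)*s^2*(1-s)^4*r^2*(1-r)^5
    + (6249/64)*s^2*(1-s)^4*r^3*(1-r)^4 + (18555/256)*s^2*(1-s)^4*r^4*(1-r)^3
    + (5895/256)*s^2*(1-s)^4*r^5*(1-r)^2 + (675/256)*s^2*(1-s)^4*r^6*(1-r)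
    + (171/256)*s^2*(1-s)^4*r^7 + (2661/512)*s^3*(1-s)^3*(1-r)^7
    + (69/2)*s^3*(1-s)^3*r*(1-r)^6 + (195193/2048)*s^3*(1-s)^3*r^2*(1-r)^5
    + (270627/2048)*s^3*(1-s)^3*r^3*(1-r)^4 + (92709/1024)*s^3*(1-s)^3*r^4*(1-r)^3
    + (6917/256)*s^3*(1-s)^3*r^5*(1-r)^2 + (63/16)*s^3*(1-s)^3*r^6*(1-r)
    + (675/512)*s^3*(1-s)^3*r^7 + (2031/512)*s^4*(1-s)^2*(1-r)^7
    + (52305/2048)*s^4*(1-s)^2*r*(1-r)^6 + (272643/4096)*s^4*(1-s)^2*r^2*(1-r)^5
    + (701625/8192)*s^4*(1-s)^2*r^3*(1-r)^4 + (877395/16384)*s^4*(1-s)^2*r^4*(1-r)^3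
    + (240087/16384)*s^4*(1-s)^2*r^5*(1-r)^2 + (51075/16384)*s^4*(1-s)^2*r^6*(1-r)
    + (22257/16384)*s^4*(1-s)^2*r^7 + (687/512)*s^5*(1-s)*(1-r)^7
    + (8529/1024)*s^5*(1-s)*r*(1-r)^6 + (333825/16384)*s^5*(1-s)*r^2*(1-r)^5
    + (390495/16384)*s^5*(1-s)*r^3*(1-r)^4 + (420915/32768)*s^5*(1-s)*r^4*(1-r)^3
    + (3159/1024)*s^5*(1-s)*r^5*(1-r)^2 + (370089/262144)*s^5*(1-s)*r^6*(1-r)
    + (190305/262144)*s^5*(1-s)*r^7 + (69/512)*s^6*(1-r)^7 + (1617/2048)*s^6*r*(1-r)^6
    + (28093/16384)*s^6*r^2*(1-r)^5 + (25605/16384)*s^6*r^3*(1-r)^4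
    + (13485/32768)*s^6*r^4*(1-r)^3 + (793/16384)*s^6*r^5*(1-r)^2
    + (78201/262144)*s^6*r^6*(1-r) + (41553/262144)*s^6*r^7" (is "0 \<le> ?B")
    using \<open>0 \<le> s\<close> \<open>s \<le> 1\<close> r by (intro add_nonneg_nonneg mult_nonneg_nonneg zero_le_power) auto
  have "0 \<le> a*(1-a)*r^2 * ?B"
    using a by (intro mult_nonneg_nonneg[OF _ B]) simp
  also have "\<dots> = (1 - (1-a) * (1 + x + 5/8*x^2)) * (2*a^2 + 2*a*w + w^2) - 2*a^3"
    unfolding w_def x_def a_eq by algebra
  finally show ?thesis
    by simp
qed

lemma exp_neg_le_inverse_quadratic:
  fixes y :: real
  assumes "0 \<le> y"
  shows "exp (- y) \<le> 1 / (1 + y + y^2/2)"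
proof -
  have "0 < 1 + y + y^2/2"
    using assms by (simp add: add_pos_nonneg)
  then show ?thesis
    using exp_lower_Taylor_quadratic[OF assms] by (simp add: exp_minus le_imp_inverse_le flip: inverse_eq_divide)
qed

lemma two_point_gauss_bump_small_weight:
  fixes a r :: real
  assumes a: "0 < a" "a \<le> 3/8" and r: "0 \<le> r" "r \<le> 1"
  shows "a * gauss_bump a (- (2*(1-a)*r)) + (1-a) * gauss_bump a (2*a*r) \<le> 1"
proof -
  define w where "w = (1-a)*r*((1-a)*r + 2*a)"
  define x where "x = a*r*(2-r)"
  define D where "D = 2*a^2 + 2*a*w + w^2"
  have "0 \<le> w" "0 \<le> x"
    using a r unfolding w_def x_def by auto
  have "r*(2-r) \<le> 1"
    using zero_le_power2[of "r - 1"] by (simp add: power2_eq_square algebra_simps)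
  then have "x \<le> a"
    using a mult_left_le[of "r*(2-r)" a] unfolding x_def by (simp add: mult.assoc)
  have D_pos: "0 < D"
    using a \<open>0 \<le> w\<close> unfolding D_def by (simp add: add_pos_nonneg)
  have "1 + w/a + (w/a)^2/2 = D / (2*a^2)"
    using a unfolding D_def by (simp add: field_simps power2_eq_square)
  then have "exp (- (w/a)) \<le> 2*a^2 / D"
    using exp_neg_le_inverse_quadratic[of "w/a"] \<open>0 \<le> w\<close> a by simp
  then have "a * exp (- (w/a)) \<le> a * (2*a^2 / D)"
    by (rule mult_left_mono) (use a in simp)
  also have "\<dots> \<le> 1 - (1-a) * (1 + x + 5/8*x^2)"
    using two_point_small_weight_certificate[of a r] a r D_pos unfolding w_def x_def D_def
    by (simp add: le_divide_eq pos_divide_le_eq power2_eq_square power3_eq_cube mult.commute)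
  finally have "a * exp (- (w/a)) \<le> 1 - (1-a) * (1 + x + 5/8*x^2)" .
  moreover have "(1-a) * exp x \<le> (1-a) * (1 + x + 5/8*x^2)"
    using exp_le_quadratic_small[OF \<open>0 \<le> x\<close>] \<open>x \<le> a\<close> a by (intro mult_left_mono) auto
  ultimately have "a * exp (- (w/a)) + (1-a) * exp x \<le> 1"
    by linarith
  then show ?thesis
    unfolding w_def x_def gauss_bump_two_point_eq[OF a(1)] by simp
qed

lemma cubic_nonneg_of_small_coeff:
  fixes u r :: real
  assumes u: "0 \<le> u" "u \<le> 2/3" and r: "0 \<le> r" "r \<le> 1"
  shows "0 \<le> u * (1 - 4*r + 2*(1+u)*r^3) + 2*(1 + u - u^2)*r^2"
proof -
  define Q where "Q = 1 - u - u^2 + (u + u^2)*r"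
  have "u^2 \<le> 2/3*u"
    using mult_right_mono[OF u(2) u(1)] by (simp add: power2_eq_square)
  have "0 \<le> u*(1 - 2*r)^2 + 2*(r^2*Q)"
  proof (cases "1/5 \<le> r")
    case True
    have "(u + u^2)*(1 - r) \<le> 10/9 * (4/5)"
      using u r True \<open>u^2 \<le> 2/3*u\<close> by (intro mult_mono) auto
    then have "0 \<le> Q"
      unfolding Q_def by (simp add: algebra_simps)
    then show ?thesis
      using u by simp
  next
    case False
    have "(3/5)^2 \<le> (1 - 2*r)^2"
      using False r by (intro power_mono) auto
    then have "9/25 \<le> (1 - 2*r)^2"
      by (simp add: power_divide)
    from mult_left_mono[OF this u(1)] have "9/25 * u \<le> u*(1 - 2*r)^2"
      by simp
    moreover have "r^2 \<le> (1/5)^2"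
      using False r by (intro power_mono) auto
    then have "r^2 \<le> 1/25"
      by (simp add: power_divide)
    from mult_right_mono[OF this u(1)] have "r^2 * u \<le> 1/25 * u"
      by simp
    moreover have "0 \<le> (u + u^2)*r"
      using u r by simp
    then have "- (5/3)*u \<le> Q"
      unfolding Q_def using \<open>u^2 \<le> 2/3*u\<close> by linarith
    from mult_left_mono[OF this, of "r^2"] have "- (5/3) * (r^2 * u) \<le> r^2 * Q"
      by (simp add: algebra_simps)
    ultimately show ?thesis
      using u(1) by linarith
  qed
  also have "u*(1 - 2*r)^2 + 2*(r^2*Q) = u * (1 - 4*r + 2*(1+u)*r^3) + 2*(1 + u - u^2)*r^2"
    unfolding Q_def by algebra
  finally show ?thesis .
qed

lemma one_minus_mult_exp_quadratic_le:
  fixes u r :: real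
  assumes u: "0 \<le> u" "u \<le> 2/3" and r: "0 \<le> r" "r \<le> 1"
  shows "(1 - r) * exp (2*r + u*r^2) \<le> 1 + (1+u)*r"
proof (cases "r = 1")
  case False
  with r have "r < 1"
    by simp
  define A where "A t = ln (1 + (1+u)*t) - ln (1 - t) - (2*t + u*t^2)" for t
  have "A 0 \<le> A r"
  proof (rule DERIV_nonneg_imp_nondecreasing[OF r(1)])
    fix t assume t: "0 \<le> t" "t \<le> r"
    define p q where "p = 1 + (1+u)*t" and "q = 1 - t"
    have pos: "0 < p" "0 < q"
      using t \<open>r < 1\<close> u unfolding p_def q_def by (auto intro: add_pos_nonneg)
    have "(A has_real_derivative (1+u)/p + 1/q - (2 + 2*u*t)) (at t)"
      using pos unfolding A_def[abs_def] p_def q_def by (auto intro!: derivative_eq_intros)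
    moreover have "(1+u)/p + 1/q - (2 + 2*u*t) = ((1+u)*q + p - (2 + 2*u*t)*p*q) / (p*q)"
      using pos by (simp add: field_simps)
    moreover have "(1+u)*q + p - (2 + 2*u*t)*p*q = u * (1 - 4*t + 2*(1+u)*t^3) + 2*(1 + u - u^2)*t^2"
      unfolding p_def q_def by algebra
    moreover have "0 \<le> u * (1 - 4*t + 2*(1+u)*t^3) + 2*(1 + u - u^2)*t^2"
      using cubic_nonneg_of_small_coeff[OF u, of t] t r by simp
    ultimately show "\<exists>y. (A has_real_derivative y) (at t) \<and> 0 \<le> y"
      using pos by auto
  qed
  then have "ln (1 - r) + (2*r + u*r^2) \<le> ln (1 + (1+u)*r)"
    unfolding A_def by simp
  then have "exp (ln (1 - r) + (2*r + u*r^2)) \<le> exp (ln (1 + (1+u)*r))"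
    by simp
  also have "\<dots> = 1 + (1+u)*r"
    using u r by (intro exp_ln add_pos_nonneg) auto
  finally show ?thesis
    using \<open>r < 1\<close> by (simp add: exp_add)
qed (use u in simp)

lemma two_point_gauss_bump_large_weight:
  fixes a r :: real
  assumes a: "3/8 \<le> a" "a \<le> 1/2" and r: "0 \<le> r" "r \<le> 1"
  shows "a * gauss_bump a (- (2*(1-a)*r)) + (1-a) * gauss_bump a (2*a*r) \<le> 1"
proof -
  have "0 < a"
    using a by simp
  define u where "u = (1 - 2*a)/a"
  have u: "0 \<le> u" "u \<le> 2/3"
    using a \<open>0 < a\<close> unfolding u_def by (auto simp: field_simps)
  define z where "z t = (1-a)*t*((1-a)*t + 2*a)/a" for t
  define y where "y t = a*t*(2-t)" for t
  define F where "F t = a * exp (- z t) + (1-a) * exp (y t)" for t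
  have "F r \<le> F 0"
  proof (rule DERIV_nonpos_imp_nonincreasing[OF r(1)])
    fix t assume t: "0 \<le> t" "t \<le> r"
    have "(F has_real_derivative 2*(1-a) * (a*(1-t)*exp (y t) - ((1-a)*t + a)*exp (- z t))) (at t)"
      unfolding F_def[abs_def] z_def y_def using \<open>0 < a\<close>
      by (auto intro!: derivative_eq_intros simp: field_simps)
    moreover have "a*(1-t)*exp (y t) \<le> ((1-a)*t + a)*exp (- z t)"
    proof -
      have "y t + z t = 2*t + u*t^2"
        unfolding y_def z_def u_def using \<open>0 < a\<close> by (simp add: field_simps power2_eq_square)
      then have "a * ((1 - t) * exp (y t + z t)) \<le> a * (1 + (1+u)*t)"
        using one_minus_mult_exp_quadratic_le[OF u, of t] t r \<open>0 < a\<close> by simp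
      also have "\<dots> = (1-a)*t + a"
        using \<open>0 < a\<close> unfolding u_def by (simp add: field_simps)
      finally show ?thesis
        by (simp add: exp_add exp_minus divide_inverse[symmetric] pos_le_divide_eq mult.assoc)
    qed
    ultimately show "\<exists>D. (F has_real_derivative D) (at t) \<and> D \<le> 0"
      using a by (intro exI conjI) (auto intro: mult_nonneg_nonpos)
  qed
  then show ?thesis
    unfolding F_def z_def y_def gauss_bump_two_point_eq[OF \<open>0 < a\<close>] by simp
qed

lemma two_point_gauss_bump:
  assumes "0 < a" "a \<le> 1/2" "0 \<le> r" "r \<le> 1"
  shows "a * gauss_bump a (- (2*(1-a)*r)) + (1-a) * gauss_bump a (2*a*r) \<le> 1"
  using assms two_point_gauss_bump_small_weight two_point_gauss_bump_large_weight
  by (cases "a \<le> 3/8") auto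

(* For a <= 1/2 a concave nondecreasing majorant of gauss_bump on [0, infinity), equal to it on
   [0, 2a] where gauss_bump is concave and rises to its maximum exp a; bump_hull_slope is its
   derivative (the left one at 2a). *)
definition bump_hull :: "real \<Rightarrow> real \<Rightarrow> real" where
  "bump_hull a x = (if x \<le> 2*a then gauss_bump a x else exp a)"

definition bump_hull_slope :: "real \<Rightarrow> real \<Rightarrow> real" where
  "bump_hull_slope a x = (if x \<le> 2*a then (1 - x/(2*a)) * gauss_bump a x else 0)"

lemma bump_hull_0: "0 < a \<Longrightarrow> bump_hull a 0 = 1"
  by (simp add: bump_hull_def)

lemma gauss_bump_le_hull: "0 < a \<Longrightarrow> gauss_bump a c \<le> bump_hull a c"
  by (simp add: bump_hull_def gauss_bump_le_exp)

lemma bump_hull_below_tangent: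
  assumes a: "0 < a" "a \<le> 1/2" and "0 \<le> x" "0 \<le> c"
  shows "bump_hull a c \<le> bump_hull a x + bump_hull_slope a x * (c - x)"
proof (cases "x \<le> 2*a")
  case False
  then show ?thesis
    using gauss_bump_le_exp[OF a(1)] by (simp add: bump_hull_def bump_hull_slope_def)
next
  case x: True
  show ?thesis
  proof (cases "c \<le> 2*a")
    case True
    then show ?thesis
      using gauss_bump_below_tangent[OF a] assms x by (simp add: bump_hull_def bump_hull_slope_def)
  next
    case False
    have "0 \<le> (1 - x/(2*a)) * gauss_bump a x"
      using x a gauss_bump_pos[of a x] by (simp add: field_simps)
    have "exp a = gauss_bump a (2*a)"
      using a by (simp add: gauss_bump_double)
    also have "\<dots> \<le> gauss_bump a x + (1 - x/(2*a)) * gauss_bump a x * (2*a - x)"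
      using gauss_bump_below_tangent[OF a] assms x by simp
    also have "\<dots> \<le> gauss_bump a x + (1 - x/(2*a)) * gauss_bump a x * (c - x)"
      using False \<open>0 \<le> (1 - x/(2*a)) * gauss_bump a x\<close> by (simp add: mult_left_mono)
    finally show ?thesis
      using x False by (simp add: bump_hull_def bump_hull_slope_def)
  qed
qed

lemma gauss_bump_le_one_plus:
  assumes a: "0 < a" "a \<le> 1/2" and "0 \<le> c"
  shows "gauss_bump a c \<le> 1 + c"
  using gauss_bump_le_hull[OF a(1), of c] bump_hull_below_tangent[OF a order_refl assms(3)] a
  by (simp add: bump_hull_0 bump_hull_slope_def)

lemma bump_hull_chord_slope_antimono:
  assumes a: "0 < a" "a \<le> 1/2" and "0 < x" "x \<le> y"
  shows "(bump_hull a y - 1) * x \<le> (bump_hull a x - 1) * y"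
proof -
  define s where "s = bump_hull_slope a x"
  have "s * x \<le> bump_hull a x - 1"
    using bump_hull_below_tangent[OF a, of x 0] assms unfolding s_def by (simp add: bump_hull_0)
  then have "s * x * (y - x) \<le> (bump_hull a x - 1) * (y - x)"
    using assms by (intro mult_right_mono) auto
  moreover have "bump_hull a y \<le> bump_hull a x + s * (y - x)"
    using bump_hull_below_tangent[OF a, of x y] assms unfolding s_def by simp
  then have "(bump_hull a y - 1) * x \<le> (bump_hull a x - 1 + s * (y - x)) * x"
    using assms by (intro mult_right_mono) auto
  ultimately show ?thesis
    by (simp add: algebra_simps)
qed

lemma two_point_gauss_bump_hull:
  assumes a: "0 < a" "a \<le> 1/2" and "0 \<le> t"
  shows "a * gauss_bump a (- t) + (1-a) * bump_hull a (a*t/(1-a)) \<le> 1"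
proof (cases "t \<le> 2*(1-a)")
  case True
  define r where "r = t / (2*(1-a))"
  have r: "0 \<le> r" "r \<le> 1"
    using a assms(3) True unfolding r_def by (auto simp: field_simps)
  have t_eq: "t = 2*(1-a)*r" and x_eq: "a*t/(1-a) = 2*a*r"
    using a unfolding r_def by (auto simp: field_simps)
  have "bump_hull a (2*a*r) = gauss_bump a (2*a*r)"
    using a r by (simp add: bump_hull_def)
  then show ?thesis
    using two_point_gauss_bump[OF a r] unfolding x_eq unfolding t_eq by simp
next
  case False
  have "2*a*(1-a) \<le> a*t"
    using mult_left_mono[of "2*(1-a)" t a] a False by (simp add: mult.assoc)
  then have "2*a \<le> a*t/(1-a)"
    using a by (simp add: le_divide_eq)
  then have "bump_hull a (a*t/(1-a)) = gauss_bump a (2*a*1)"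
    using a by (auto simp: bump_hull_def gauss_bump_double)
  moreover have "gauss_bump a (- t) \<le> gauss_bump a (- (2*(1-a)*1))"
    using a False by (intro gauss_bump_mono) auto
  then have "a * gauss_bump a (- t) \<le> a * gauss_bump a (- (2*(1-a)*1))"
    using a by (intro mult_left_mono) auto
  ultimately show ?thesis
    using two_point_gauss_bump[OF a, of 1] by simp
qed

lemma gauss_bump_neg_le_chord:
  assumes a: "0 < a" "a \<le> 1/2" and t: "0 < t" and t_le: "a*t \<le> (1-a)*x"
  shows "gauss_bump a (- t) \<le> 1 - t * ((bump_hull a x - 1) / x)"
proof -
  define x1 where "x1 = a*t/(1-a)"
  have "0 < x1" "x1 \<le> x"
    using a t t_le unfolding x1_def by (auto simp: field_simps)
  have ratio: "1 - a = a * (t / x1)"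
    using a t unfolding x1_def by (simp add: field_simps)
  have "a * gauss_bump a (- t) \<le> 1 - (1-a) * bump_hull a x1"
    using two_point_gauss_bump_hull[OF a, of t] t unfolding x1_def by simp
  also have "\<dots> = a - (1-a) * (bump_hull a x1 - 1)"
    by (simp add: algebra_simps)
  also have "\<dots> = a * (1 - t / x1 * (bump_hull a x1 - 1))"
    unfolding ratio using \<open>0 < x1\<close> by (simp add: field_simps)
  finally have "a * gauss_bump a (- t) \<le> a * (1 - t / x1 * (bump_hull a x1 - 1))" .
  then have "gauss_bump a (- t) \<le> 1 - t * ((bump_hull a x1 - 1) / x1)"
    using a by simp
  also have "\<dots> \<le> 1 - t * ((bump_hull a x - 1) / x)"
    using bump_hull_chord_slope_antimono[OF a \<open>0 < x1\<close> \<open>x1 \<le> x\<close>] \<open>0 < x1\<close> \<open>x1 \<le> x\<close> t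
    by (intro diff_left_mono mult_left_mono) (auto simp: divide_le_eq le_divide_eq mult.commute)
  finally show ?thesis .
qed

lemma sum_piecewise_affine_bounds:
  fixes p c :: "'i \<Rightarrow> real"
  assumes "(\<Sum>j\<in>P. p j) + (\<Sum>j\<in>N. p j) = 1"
    and "(\<Sum>j\<in>P. p j * c j) = M" and "(\<Sum>j\<in>N. p j * c j) = - M"
  shows "(\<Sum>j\<in>P. p j * (y + s * (c j - x))) + (\<Sum>j\<in>N. p j * (1 + c j * k))
    = 1 + (y - s * x - 1) * (\<Sum>j\<in>P. p j) + (s - k) * M"
proof -
  have "(\<Sum>j\<in>P. p j * (y + s * (c j - x))) = (\<Sum>j\<in>P. (y - s * x) * p j + s * (p j * c j))"
    by (simp add: algebra_simps)
  moreover have "(\<Sum>j\<in>N. p j * (1 + c j * k)) = (\<Sum>j\<in>N. p j + k * (p j * c j))"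
    by (simp add: algebra_simps)
  ultimately show ?thesis
    using assms by (simp add: sum.distrib flip: sum_distrib_left) (simp add: algebra_simps)
qed

lemma gauss_bump_weighted_sum_le_one:
  fixes p c :: "'i \<Rightarrow> real"
  assumes a: "0 < a" "a \<le> 1/2" and "finite N" "N \<noteq> {}"
    and P: "\<And>j. j \<in> P \<Longrightarrow> 0 \<le> p j \<and> 0 \<le> c j"
    and N: "\<And>j. j \<in> N \<Longrightarrow> a \<le> p j \<and> c j < 0"
    and weights: "(\<Sum>j\<in>P. p j) + (\<Sum>j\<in>N. p j) = 1" and P_weight: "(\<Sum>j\<in>P. p j) \<le> 1 - a"
    and balance: "(\<Sum>j\<in>P. p j * c j) + (\<Sum>j\<in>N. p j * c j) = 0"
  shows "(\<Sum>j\<in>P. p j * gauss_bump a (c j)) + (\<Sum>j\<in>N. p j * gauss_bump a (c j)) \<le> 1"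
proof -
  define M where "M = (\<Sum>j\<in>N. p j * - c j)"
  have N_terms: "0 < p j * - c j" if "j \<in> N" for j
    using N[OF that] a by (intro mult_pos_pos) auto
  have "0 < M"
    unfolding M_def using \<open>finite N\<close> \<open>N \<noteq> {}\<close> N_terms by (intro sum_pos) auto
  have M_bound: "p j * - c j \<le> M" if "j \<in> N" for j
    unfolding M_def using that \<open>finite N\<close> N_terms by (intro member_le_sum) (auto intro: less_imp_le)
  define x0 where "x0 = M / (1-a)"
  have "0 < x0"
    using \<open>0 < M\<close> a unfolding x0_def by simp
  define y0 \<sigma> where "y0 = bump_hull a x0" and "\<sigma> = bump_hull_slope a x0"
  have intercept: "1 \<le> y0 - \<sigma> * x0"
    using bump_hull_below_tangent[OF a, of x0 0] \<open>0 < x0\<close> a unfolding y0_def \<sigma>_def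
    by (simp add: bump_hull_0)
  have bound_P: "p j * gauss_bump a (c j) \<le> p j * (y0 + \<sigma> * (c j - x0))" if "j \<in> P" for j
    using gauss_bump_le_hull[OF a(1), of "c j"] bump_hull_below_tangent[OF a, of x0 "c j"]
      P[OF that] \<open>0 < x0\<close> unfolding y0_def \<sigma>_def by (intro mult_left_mono) auto
  have bound_N: "p j * gauss_bump a (c j) \<le> p j * (1 + c j * ((y0 - 1) / x0))" if "j \<in> N" for j
  proof -
    have "a * - c j \<le> p j * - c j"
      using N[OF that] by (intro mult_right_mono) auto
    then have "a * - c j \<le> (1-a) * x0"
      using M_bound[OF that] a unfolding x0_def by simp
    from gauss_bump_neg_le_chord[OF a _ this] show ?thesis
      using N[OF that] a unfolding y0_def by (intro mult_left_mono) auto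
  qed
  have "(\<Sum>j\<in>P. p j * gauss_bump a (c j)) + (\<Sum>j\<in>N. p j * gauss_bump a (c j))
      \<le> (\<Sum>j\<in>P. p j * (y0 + \<sigma> * (c j - x0))) + (\<Sum>j\<in>N. p j * (1 + c j * ((y0 - 1) / x0)))"
    using bound_P bound_N by (intro add_mono sum_mono) auto
  also have "\<dots> = 1 + (y0 - \<sigma> * x0 - 1) * (\<Sum>j\<in>P. p j) + (\<sigma> - (y0 - 1) / x0) * M"
    using weights balance unfolding M_def by (intro sum_piecewise_affine_bounds) (simp_all add: sum_negf)
  also have "\<dots> = 1 + (y0 - \<sigma> * x0 - 1) * ((\<Sum>j\<in>P. p j) - (1-a))"
    using a \<open>0 < M\<close> unfolding x0_def by (simp add: field_simps)
  also have "\<dots> \<le> 1"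
    using intercept P_weight by (simp add: mult_nonneg_nonpos)
  finally show ?thesis .
qed

lemma gauss_bump_mean_le_one:
  fixes p c :: "'i \<Rightarrow> real"
  assumes a: "0 < a" "a \<le> 1/2" and "finite A" and p: "\<And>j. j \<in> A \<Longrightarrow> a \<le> p j"
    and weights: "(\<Sum>j\<in>A. p j) = 1" and mean: "(\<Sum>j\<in>A. p j * c j) = 0"
  shows "(\<Sum>j\<in>A. p j * gauss_bump a (c j)) \<le> 1"
proof -
  define P N where "P = A \<inter> {j. 0 \<le> c j}" and "N = A - {j. 0 \<le> c j}"
  have split: "(\<Sum>j\<in>A. f j) = (\<Sum>j\<in>P. f j) + (\<Sum>j\<in>N. f j)" for f :: "'i \<Rightarrow> real"
    unfolding P_def N_def by (rule sum.Int_Diff[OF \<open>finite A\<close>])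
  have p_nonneg: "0 \<le> p j" if "j \<in> A" for j
    using a(1) p[OF that] by linarith
  show ?thesis
  proof (cases "N = {}")
    case True
    then have "(\<Sum>j\<in>A. p j * gauss_bump a (c j)) \<le> (\<Sum>j\<in>A. p j * (1 + c j))"
      using a p_nonneg gauss_bump_le_one_plus unfolding N_def by (intro sum_mono mult_left_mono) auto
    also have "\<dots> = 1"
      using weights mean by (simp add: algebra_simps sum.distrib)
    finally show ?thesis .
  next
    case False
    then obtain j0 where "j0 \<in> N"
      by blast
    have "p j0 \<le> (\<Sum>j\<in>N. p j)"
      using \<open>j0 \<in> N\<close> \<open>finite A\<close> p_nonneg unfolding N_def by (intro member_le_sum) auto
    then have "(\<Sum>j\<in>P. p j) \<le> 1 - a"
      using p[of j0] \<open>j0 \<in> N\<close> weights unfolding split N_def by auto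
    then show ?thesis
      using False a \<open>finite A\<close> p p_nonneg weights mean unfolding split
      by (intro gauss_bump_weighted_sum_le_one) (auto simp: P_def N_def)
  qed
qed

theorem lemma3p1:
  fixes \<alpha> :: real and m :: nat and p c :: "nat \<Rightarrow> real"
  assumes "0 < \<alpha>" and "\<alpha> \<le> 1/2"
    and "\<And>j. j < m \<Longrightarrow> p j \<ge> \<alpha>"
    and "(\<Sum>j<m. p j) = 1"
    and "(\<Sum>j<m. p j * c j) = 0"
  shows "(\<Sum>j<m. p j * exp (c j - (c j)\<^sup>2 / (4 * \<alpha>))) \<le> 1"
  using gauss_bump_mean_le_one[of \<alpha> "{..<m}" p c] assms unfolding gauss_bump_def by simp

end
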